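(* Let $\mathcal{L}$ be a nonempty set, let $\langle \mathcal{M}, \models, f\rangle$ be an fC-model for $\mathcal{L}$, and define $\mathcal{C}: 2^{\mathcal{L}} \to 2^{\mathcal{L}}$ by $\mathcal{C}(A) = \overline{f(\widehat{A})}$ for all $A \subseteq \mathcal{L}$. Then $\mathcal{C}$ is a C-logics, i.e. it satisfies Inclusion ($A \subseteq \mathcal{C}(A)$ for all $A\subseteq\mathcal{L}$) and Cumulativity (for all $A, B \subseteq \mathcal{L}$, $A \subseteq B \subseteq \mathcal{C}(A)$ implies $\mathcal{C}(A) = \mathcal{C}(B)$).
   Context: $\mathcal{L}$ is an arbitrary nonempty set (of "propositions"), with no structure assumed. An fC-model for $\mathcal{L}$ is a triple $\langle \mathcal{M}, \models, f\rangle$ where $\mathcal{M}$ is any set, $\models \subseteq \mathcal{M}\times\mathcal{L}$ is any binary relation, and $f: 2^{\mathcal{M}} \to 2^{\mathcal{M}}$ is a function defined on all subsets of $\mathcal{M}$ satisfying, for all $X, Y \subseteq \mathcal{M}$: Contraction $f(X) \subseteq X$, and Local Cumulativity: $f(X) \subseteq Y \subseteq X \Rightarrow f(Y) = f(X)$. For $A \subseteq \mathcal{L}$, $\widehat{A} = \{x \in \mathcal{M} : x \models a \text{ for all } a \in A\}$; for $X \subseteq \mathcal{M}$, $\overline{X} = \{a \in \mathcal{L} : x \models a \text{ for all } x \in X\}$. *)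

theory Defs
  imports Main
begin

definition hat :: "'m set \<Rightarrow> ('m \<times> 'l) set \<Rightarrow> 'l set \<Rightarrow> 'm set" where
  "hat M sat A = {x \<in> M. \<forall>a\<in>A. (x, a) \<in> sat}"

definition bar :: "'l set \<Rightarrow> ('m \<times> 'l) set \<Rightarrow> 'm set \<Rightarrow> 'l set" where
  "bar L sat X = {a \<in> L. \<forall>x\<in>X. (x, a) \<in> sat}"

definition fC_model :: "'l set \<Rightarrow> 'm set \<Rightarrow> ('m \<times> 'l) set \<Rightarrow> ('m set \<Rightarrow> 'm set) \<Rightarrow> bool" where
  "fC_model L M sat f \<longleftrightarrow>
     sat \<subseteq> M \<times> L \<and>
     (\<forall>X. X \<subseteq> M \<longrightarrow> f X \<subseteq> X) \<and>
     (\<forall>X Y. X \<subseteq> M \<longrightarrow> Y \<subseteq> M \<longrightarrow> f X \<subseteq> Y \<longrightarrow> Y \<subseteq> X \<longrightarrow> f Y = f X)"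

definition C_logic :: "'l set \<Rightarrow> ('l set \<Rightarrow> 'l set) \<Rightarrow> bool" where
  "C_logic L C \<longleftrightarrow>
     (\<forall>A. A \<subseteq> L \<longrightarrow> C A \<subseteq> L) \<and>
     (\<forall>A. A \<subseteq> L \<longrightarrow> A \<subseteq> C A) \<and>
     (\<forall>A B. A \<subseteq> L \<longrightarrow> B \<subseteq> L \<longrightarrow> A \<subseteq> B \<longrightarrow> B \<subseteq> C A \<longrightarrow> C A = C B)"

end

theory Submission
  imports Defs
begin

text \<open>The maps \<open>hat\<close> and \<open>bar\<close> form an antitone Galois connection between subsets of \<open>M\<close> and
  subsets of \<open>L\<close>. Inclusion then follows from contraction \<open>f (hat A) \<subseteq> hat A\<close>; for
  cumulativity, \<open>B \<subseteq> bar (f (hat A))\<close> means \<open>f (hat A) \<subseteq> hat B\<close>, and \<open>A \<subseteq> B\<close> gives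
  \<open>hat B \<subseteq> hat A\<close>, so local cumulativity of \<open>f\<close> yields \<open>f (hat B) = f (hat A)\<close>.\<close>

lemma hat_subset: "hat M sat A \<subseteq> M"
  unfolding hat_def by blast

lemma bar_subset: "bar L sat X \<subseteq> L"
  unfolding bar_def by blast

lemma hat_antimono: "A \<subseteq> B \<Longrightarrow> hat M sat B \<subseteq> hat M sat A"
  unfolding hat_def by blast

lemma subset_hat_iff_subset_bar:
  assumes "X \<subseteq> M" and "A \<subseteq> L"
  shows "X \<subseteq> hat M sat A \<longleftrightarrow> A \<subseteq> bar L sat X"
  using assms unfolding hat_def bar_def by blast

lemma fC_model_contraction: "fC_model L M sat f \<Longrightarrow> X \<subseteq> M \<Longrightarrow> f X \<subseteq> X"
  unfolding fC_model_def by blast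

lemma fC_model_local_cumulativity:
  "fC_model L M sat f \<Longrightarrow> X \<subseteq> M \<Longrightarrow> Y \<subseteq> M \<Longrightarrow> f X \<subseteq> Y \<Longrightarrow> Y \<subseteq> X \<Longrightarrow> f Y = f X"
  unfolding fC_model_def by blast

lemma fC_model_image_subset:
  assumes "fC_model L M sat f"
  shows "f (hat M sat A) \<subseteq> hat M sat A"
  using assms hat_subset by (rule fC_model_contraction)

lemma fC_model_inclusion:
  assumes "fC_model L M sat f" and "A \<subseteq> L"
  shows "A \<subseteq> bar L sat (f (hat M sat A))"
proof -
  have "f (hat M sat A) \<subseteq> hat M sat A"
    using assms(1) by (rule fC_model_image_subset)
  moreover have "f (hat M sat A) \<subseteq> M"
    using calculation hat_subset by (rule order_trans)
  ultimately show ?thesis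
    using assms(2) by (simp add: subset_hat_iff_subset_bar)
qed

lemma fC_model_cumulativity:
  assumes "fC_model L M sat f" and "B \<subseteq> L" and "A \<subseteq> B"
    and "B \<subseteq> bar L sat (f (hat M sat A))"
  shows "f (hat M sat B) = f (hat M sat A)"
proof -
  have "f (hat M sat A) \<subseteq> M"
    using fC_model_image_subset[OF assms(1)] hat_subset by (rule order_trans)
  then have "f (hat M sat A) \<subseteq> hat M sat B"
    using assms(2,4) by (simp add: subset_hat_iff_subset_bar)
  moreover have "hat M sat B \<subseteq> hat M sat A"
    using assms(3) by (rule hat_antimono)
  ultimately show ?thesis
    by (rule fC_model_local_cumulativity[OF assms(1) hat_subset hat_subset])
qed

theorem theorem1:
  fixes L :: "'l set" and M :: "'m set" and sat :: "('m \<times> 'l) set"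
    and f :: "'m set \<Rightarrow> 'm set"
  assumes "L \<noteq> {}"
    and "fC_model L M sat f"
  shows "C_logic L (\<lambda>A. bar L sat (f (hat M sat A)))"
  unfolding C_logic_def
proof (intro conjI allI impI)
  fix A B :: "'l set"
  show "bar L sat (f (hat M sat A)) \<subseteq> L"
    by (rule bar_subset)
  show "A \<subseteq> L \<Longrightarrow> A \<subseteq> bar L sat (f (hat M sat A))"
    using assms(2) by (rule fC_model_inclusion)
  show "bar L sat (f (hat M sat A)) = bar L sat (f (hat M sat B))"
    if "B \<subseteq> L" "A \<subseteq> B" "B \<subseteq> bar L sat (f (hat M sat A))"
    using fC_model_cumulativity[OF assms(2) that] by simp
qed

end
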